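(* Let $A\subset\mathbb{R}^N$ be nonempty and closed, and let $U:[0,\infty)\rightsquigarrow\mathbb{R}^M$ be measurable with nonempty closed images. Let $H:[0,\infty)\times\mathbb{R}^N\times\mathbb{R}^N\to\mathbb{R}$ be measurable in $t$, continuous in $x$, convex in $p$, with $H(t,x,0)\le-\phi(t)$ for all $t,x$ for some $\phi\in L^1([0,\infty);\mathbb{R})$. Let $f:[0,\infty)\times\mathbb{R}^N\times\mathbb{R}^M\to\mathbb{R}^N$ and $l:[0,\infty)\times\mathbb{R}^N\times\mathbb{R}^M\to\mathbb{R}$ be Lebesgue measurable in $t$ for all $(x,u)$, continuous in $(x,u)$ for all $t$, and satisfy $l(t,x,u)\ge\phi_1(t)$ for all $t,x,u$ for some $\phi_1\in L^1([0,\infty);\mathbb{R})$. If $(U,f,l)$ is an epigraphical representation of $H$, i.e. $\mathrm{gph}H^*(t,x,\cdot)\subset(f,l)(t,x,U(t))\subset\mathrm{epi}H^*(t,x,\cdot)$ for all $t\ge0$, $x\in\mathbb{R}^N$, then the value functions $V$ and $\mathcal{V}$ are well-defined and $$V(t_0,x_0)=\mathcal{V}(t_0,x_0)\quad\text{for all }(t_0,x_0)\in[0,\infty)\times A.$$ Moreover, if $\bar x(\cdot)$ is an optimal trajectory of $V$ at $(t_0,x_0)\in\mathrm{dom}V$, then there exists a measurable $\bar u(\cdot)$ such that $(\bar x,\bar u)(\cdot)$ is an optimal pair of $\mathcal{V}$ at $(t_0,x_0)$; conversely, if $(\bar x,\bar u)(\cdot)$ is an optimal pair of $\mathcal{V}$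 at $(t_0,x_0)\in\mathrm{dom}\mathcal{V}$, then $\bar x(\cdot)$ is an optimal trajectory of $V$ at $(t_0,x_0)$.
   Context: $H^*(t,x,v)=\sup_p\{\langle v,p\rangle-H(t,x,p)\}$, $\mathrm{dom}H^*(t,x,\cdot)=\{v:H^*(t,x,v)<+\infty\}$, $\mathrm{gph}$ the graph over the domain, $\mathrm{epi}$ the epigraph, $(f,l)(t,x,u)=(f(t,x,u),l(t,x,u))$. $S_H(t_0,x_0)$: locally absolutely continuous $x:[t_0,\infty)\to\mathbb{R}^N$ with $\dot x(t)\in\mathrm{dom}H^*(t,x(t),\cdot)$ a.e., $x(t_0)=x_0$, $x([t_0,\infty))\subset A$; $V(t_0,x_0)=\inf_{x\in S_H(t_0,x_0)}\int_{t_0}^\infty H^*(t,x(t),\dot x(t))dt$. $S_f(t_0,x_0)$: pairs $(x,u)$ with $x:[t_0,\infty)\to\mathbb{R}^N$ locally absolutely continuous, $u$ measurable, $\dot x(t)=f(t,x(t),u(t))$, $u(t)\in U(t)$ a.e. $t\ge t_0$, $x(t_0)=x_0$, $x([t_0,\infty))\subset A$; $\mathcal{V}(t_0,x_0)=\inf_{(x,u)\in S_f(t_0,x_0)}\int_{t_0}^\infty l(t,x(t),u(t))dt$. Infima over empty sets are $+\infty$. An optimal trajectory (pair) is one attaining the infimum. *)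

theory Defs
  imports "HOL-Analysis.Analysis"
begin

definition abs_cont_on :: "(real \<Rightarrow> 'a::real_normed_vector) \<Rightarrow> real \<Rightarrow> real \<Rightarrow> bool" where
  "abs_cont_on x a b \<longleftrightarrow>
     (\<forall>\<epsilon>>0. \<exists>\<delta>>0. \<forall>(n::nat) (c::nat \<Rightarrow> real) (d::nat \<Rightarrow> real).
        (\<forall>i<n. a \<le> c i \<and> c i \<le> d i \<and> d i \<le> b) \<longrightarrow>
        (\<forall>i<n. \<forall>j<n. i \<noteq> j \<longrightarrow> d i \<le> c j \<or> d j \<le> c i) \<longrightarrow>
        (\<Sum>i<n. d i - c i) < \<delta> \<longrightarrow>
        (\<Sum>i<n. norm (x (d i) - x (c i))) < \<epsilon>)"

definition loc_abs_cont :: "(real \<Rightarrow> 'a::real_normed_vector) \<Rightarrow> real \<Rightarrow> bool" where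
  "loc_abs_cont x t0 \<longleftrightarrow> (\<forall>T\<ge>t0. abs_cont_on x t0 T)"

definition measurable_multifun :: "(real \<Rightarrow> 'a::topological_space set) \<Rightarrow> bool" where
  "measurable_multifun U \<longleftrightarrow>
     (\<forall>W. open W \<longrightarrow> {t\<in>{0..}. U t \<inter> W \<noteq> {}} \<in> sets lebesgue)"

definition ext_integral :: "real set \<Rightarrow> (real \<Rightarrow> ereal) \<Rightarrow> ereal" where
  "ext_integral S g =
     enn2ereal (\<integral>\<^sup>+ t. e2ennreal (max 0 (g t)) * indicator S t \<partial>lebesgue)
   - enn2ereal (\<integral>\<^sup>+ t. e2ennreal (max 0 (- g t)) * indicator S t \<partial>lebesgue)"

definition Hstar :: "(real \<Rightarrow> 'n::euclidean_space \<Rightarrow> 'n \<Rightarrow> real) \<Rightarrow> real \<Rightarrow> 'n \<Rightarrow> 'n \<Rightarrow> ereal" where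
  "Hstar H t x v = (SUP p. ereal (inner v p - H t x p))"

definition domHstar :: "(real \<Rightarrow> 'n::euclidean_space \<Rightarrow> 'n \<Rightarrow> real) \<Rightarrow> real \<Rightarrow> 'n \<Rightarrow> 'n set" where
  "domHstar H t x = {v. Hstar H t x v < \<infinity>}"

definition gphHstar :: "(real \<Rightarrow> 'n::euclidean_space \<Rightarrow> 'n \<Rightarrow> real) \<Rightarrow> real \<Rightarrow> 'n \<Rightarrow> ('n \<times> real) set" where
  "gphHstar H t x = {(v, r). v \<in> domHstar H t x \<and> Hstar H t x v = ereal r}"

definition epiHstar :: "(real \<Rightarrow> 'n::euclidean_space \<Rightarrow> 'n \<Rightarrow> real) \<Rightarrow> real \<Rightarrow> 'n \<Rightarrow> ('n \<times> real) set" where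
  "epiHstar H t x = {(v, r). Hstar H t x v \<le> ereal r}"

definition S_H :: "(real \<Rightarrow> 'n::euclidean_space \<Rightarrow> 'n \<Rightarrow> real) \<Rightarrow> 'n set \<Rightarrow> real \<Rightarrow> 'n \<Rightarrow> (real \<Rightarrow> 'n) set" where
  "S_H H A t0 x0 = {x. loc_abs_cont x t0 \<and>
      (AE t in lebesgue. t \<in> {t0..} \<longrightarrow>
         x differentiable (at t) \<and> vector_derivative x (at t) \<in> domHstar H t (x t)) \<and>
      x t0 = x0 \<and> x ` {t0..} \<subseteq> A}"

definition cost_H :: "(real \<Rightarrow> 'n::euclidean_space \<Rightarrow> 'n \<Rightarrow> real) \<Rightarrow> real \<Rightarrow> (real \<Rightarrow> 'n) \<Rightarrow> ereal" where
  "cost_H H t0 x = ext_integral {t0..} (\<lambda>t. Hstar H t (x t) (vector_derivative x (at t)))"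

definition V_H :: "(real \<Rightarrow> 'n::euclidean_space \<Rightarrow> 'n \<Rightarrow> real) \<Rightarrow> 'n set \<Rightarrow> real \<Rightarrow> 'n \<Rightarrow> ereal" where
  "V_H H A t0 x0 = (INF x\<in>S_H H A t0 x0. cost_H H t0 x)"

definition S_f :: "(real \<Rightarrow> 'n::euclidean_space \<Rightarrow> 'm \<Rightarrow> 'n) \<Rightarrow> (real \<Rightarrow> 'm::euclidean_space set)
     \<Rightarrow> 'n set \<Rightarrow> real \<Rightarrow> 'n \<Rightarrow> ((real \<Rightarrow> 'n) \<times> (real \<Rightarrow> 'm)) set" where
  "S_f f U A t0 x0 = {(x, u). loc_abs_cont x t0 \<and>
      u \<in> borel_measurable (lebesgue_on {t0..}) \<and>
      (AE t in lebesgue. t \<in> {t0..} \<longrightarrow>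
         (x has_vector_derivative f t (x t) (u t)) (at t) \<and> u t \<in> U t) \<and>
      x t0 = x0 \<and> x ` {t0..} \<subseteq> A}"

definition cost_f :: "(real \<Rightarrow> 'n::euclidean_space \<Rightarrow> 'm::euclidean_space \<Rightarrow> real) \<Rightarrow> real
     \<Rightarrow> (real \<Rightarrow> 'n) \<Rightarrow> (real \<Rightarrow> 'm) \<Rightarrow> ereal" where
  "cost_f l t0 x u = ext_integral {t0..} (\<lambda>t. ereal (l t (x t) (u t)))"

definition V_f :: "(real \<Rightarrow> 'n::euclidean_space \<Rightarrow> 'm \<Rightarrow> 'n) \<Rightarrow> (real \<Rightarrow> 'n \<Rightarrow> 'm::euclidean_space \<Rightarrow> real)
     \<Rightarrow> (real \<Rightarrow> 'm set) \<Rightarrow> 'n set \<Rightarrow> real \<Rightarrow> 'n \<Rightarrow> ereal" where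
  "V_f f l U A t0 x0 = (INF xu\<in>S_f f U A t0 x0. cost_f l t0 (fst xu) (snd xu))"

definition integral_well_defined :: "real set \<Rightarrow> (real \<Rightarrow> ereal) \<Rightarrow> bool" where
  "integral_well_defined S g \<longleftrightarrow> g \<in> borel_measurable (lebesgue_on S) \<and>
     (\<integral>\<^sup>+ t. e2ennreal (max 0 (- g t)) * indicator S t \<partial>lebesgue) < \<infinity>"

end

theory Submission
  imports Defs
begin

text \<open>An admissible pair (x, u) has (x'(t), l(t, x, u)) in (f, l)(t, x, U(t)), which lies in the
  epigraph of H*(t, x, .); so x is an admissible trajectory whose cost is at most that of (x, u),
  and \<open>V_H \<le> V_f\<close>. Conversely, along an admissible trajectory x the point (x'(t), H*(t, x, x'(t)))
  lies for a.e. t in the graph of H*(t, x, .), hence in (f, l)(t, x, U(t)); Filippov's lemma turns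
  the pointwise choice of a control into a measurable one with the same cost, so \<open>V_f \<le> V_H\<close>.
  Both transformations preserve the cost of optimal solutions. The costs are well defined because
  \<open>H* \<ge> -H(t, x, 0) \<ge> \<phi>\<close> and \<open>l \<ge> \<phi>1\<close> with \<phi>, \<phi>1 integrable.\<close>

section \<open>Measurable selection of zeros of Caratheodory functions\<close>

lemma dense_sequenceE:
  obtains dd :: "nat \<Rightarrow> 'a::euclidean_space" where "\<And>x e. e > 0 \<Longrightarrow> \<exists>i. dist (dd i) x < e"
proof -
  obtain D :: "'a set" where D: "countable D" "\<And>X. open X \<Longrightarrow> X \<noteq> {} \<Longrightarrow> \<exists>d\<in>D. d \<in> X"
    using countable_dense_setE by blast
  have "\<exists>i. dist (from_nat_into D i) x < e" if "e > 0" for x e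
  proof -
    obtain d where "d \<in> D" "d \<in> ball x e" using D(2)[of "ball x e"] \<open>e > 0\<close> by auto
    then show ?thesis using from_nat_into_surj[OF D(1)] by (metis dist_commute mem_ball)
  qed
  then show ?thesis using that by blast
qed

lemma borel_measurable_Caratheodory_comp:
  fixes g :: "'t \<Rightarrow> 'a::euclidean_space \<Rightarrow> 'b::metric_space"
  assumes g_meas: "\<And>y. (\<lambda>t. g t y) \<in> borel_measurable M"
    and g_cont: "\<And>t. t \<in> space M \<Longrightarrow> continuous_on UNIV (g t)"
    and y_meas: "y \<in> borel_measurable M"
  shows "(\<lambda>t. g t (y t)) \<in> borel_measurable M"
proof -
  obtain dd :: "nat \<Rightarrow> 'a" where dd: "\<And>x e. e > 0 \<Longrightarrow> \<exists>i. dist (dd i) x < e"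
    using dense_sequenceE by blast
  define n where "n k t = (LEAST i. dist (dd i) (y t) < 1 / Suc k)" for k t
  have "n k \<in> M \<rightarrow>\<^sub>M count_space UNIV" for k
    unfolding n_def using y_meas by measurable
  then have approx_meas: "(\<lambda>t. g t (dd (n k t))) \<in> borel_measurable M" for k
    by (rule measurable_compose_countable[OF g_meas])
  show ?thesis
  proof (rule borel_measurable_LIMSEQ_metric[OF approx_meas])
    fix t assume t: "t \<in> space M"
    have "dist (dd (n k t)) (y t) < 1 / Suc k" for k
      unfolding n_def by (rule LeastI_ex) (use dd in auto)
    then have "\<forall>k. norm (dist (dd (n k t)) (y t)) \<le> inverse (real (Suc k))"
      by (simp add: inverse_eq_divide less_imp_le)
    then have "(\<lambda>k. dist (dd (n k t)) (y t)) \<longlonglongrightarrow> 0"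
      by (rule Lim_null_comparison[OF always_eventually LIMSEQ_inverse_real_of_nat])
    then have "(\<lambda>k. dd (n k t)) \<longlonglongrightarrow> y t"
      by (rule tendsto_dist_iff[THEN iffD2])
    moreover have "isCont (g t) (y t)"
      using g_cont[OF t] by (simp add: continuous_on_eq_continuous_at)
    ultimately show "(\<lambda>k. g t (dd (n k t))) \<longlonglongrightarrow> g t (y t)"
      by (rule isCont_tendsto_compose[rotated])
  qed
qed

lemma compact_ex_zero_if_small_values:
  fixes g :: "'a::metric_space \<Rightarrow> real"
  assumes "compact K" "continuous_on K g" "\<And>m::nat. \<exists>q\<in>K. \<bar>g q\<bar> < 1 / Suc m"
  shows "\<exists>z\<in>K. g z = 0"
proof -
  have "K \<noteq> {}" using assms(3)[of 0] by blast
  then obtain z where z: "z \<in> K" "\<And>q. q \<in> K \<Longrightarrow> \<bar>g z\<bar> \<le> \<bar>g q\<bar>"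
    using continuous_attains_inf[OF assms(1) _ continuous_on_rabs[OF assms(2)]] by blast
  have small: "\<bar>g z\<bar> < 1 / Suc m" for m
    using assms(3)[of m] z(2) by fastforce
  have "g z = 0"
  proof (rule ccontr)
    assume "g z \<noteq> 0"
    then obtain m where "1 / Suc m < \<bar>g z\<bar>"
      using nat_approx_posE[of "\<bar>g z\<bar>"] by auto
    with small[of m] show False by simp
  qed
  then show ?thesis using z(1) by blast
qed

text \<open>Only countable quantifiers remain on the right, which makes the left-hand side measurable
  in a parameter (\<open>pred_ex_zero_near\<close>).\<close>

lemma ex_zero_near_iff_dense:
  fixes g :: "'a::euclidean_space \<Rightarrow> real"
  assumes g_cont: "continuous_on UNIV g"
    and dd: "\<And>x e. e > 0 \<Longrightarrow> \<exists>i. dist (dd i) x < e"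
  shows "(\<exists>z. g z = 0 \<and> dist w z < r) \<longleftrightarrow>
    (\<exists>n::nat. \<forall>m::nat. \<exists>i. dist (dd i) w \<le> r - 1 / Suc n \<and> \<bar>g (dd i)\<bar> < 1 / Suc m)"
proof
  assume "\<exists>z. g z = 0 \<and> dist w z < r"
  then obtain z where z: "g z = 0" "dist w z < r" by blast
  obtain n where n: "1 / Suc n < (r - dist w z) / 2"
    using nat_approx_posE[of "(r - dist w z) / 2"] z(2) by auto
  have "\<exists>i. dist (dd i) w \<le> r - 1 / Suc n \<and> \<bar>g (dd i)\<bar> < 1 / Suc m" for m :: nat
  proof -
    have "isCont g z" using g_cont by (simp add: continuous_on_eq_continuous_at)
    then obtain \<delta> where "\<delta> > 0" and \<delta>: "\<And>y. dist y z < \<delta> \<Longrightarrow> dist (g y) (g z) < 1 / Suc m"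
      unfolding continuous_at_eps_delta by (metis of_nat_0_less_iff zero_less_Suc zero_less_divide_1_iff)
    obtain i where i: "dist (dd i) z < min \<delta> (1 / Suc n)"
      using dd[of "min \<delta> (1 / Suc n)" z] \<open>\<delta> > 0\<close> by auto
    have "dist (dd i) w \<le> dist (dd i) z + dist w z" by (rule dist_triangle2)
    then have "dist (dd i) w \<le> r - 1 / Suc n" using i n by auto
    moreover have "\<bar>g (dd i)\<bar> < 1 / Suc m" using \<delta>[of "dd i"] i z(1) by (simp add: dist_real_def)
    ultimately show ?thesis by blast
  qed
  then show "\<exists>n::nat. \<forall>m::nat. \<exists>i. dist (dd i) w \<le> r - 1 / Suc n \<and> \<bar>g (dd i)\<bar> < 1 / Suc m"
    by blast
next
  assume "\<exists>n::nat. \<forall>m::nat. \<exists>i. dist (dd i) w \<le> r - 1 / Suc n \<and> \<bar>g (dd i)\<bar> < 1 / Suc m"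
  then obtain n where "\<And>m::nat. \<exists>q\<in>cball w (r - 1 / Suc n). \<bar>g q\<bar> < 1 / Suc m"
    by (fastforce simp: dist_commute)
  then obtain z where "z \<in> cball w (r - 1 / Suc n)" "g z = 0"
    using compact_ex_zero_if_small_values[OF compact_cball continuous_on_subset[OF g_cont]] by blast
  moreover have "r - 1 / Suc n < r" by simp
  ultimately show "\<exists>z. g z = 0 \<and> dist w z < r"
    by (metis mem_cball order_le_less_trans)
qed

lemma pred_ex_zero_near:
  fixes g :: "'t \<Rightarrow> 'a::euclidean_space \<Rightarrow> real"
  assumes g_meas[measurable]: "\<And>y. (\<lambda>t. g t y) \<in> borel_measurable M"
    and g_cont: "\<And>t. t \<in> space M \<Longrightarrow> continuous_on UNIV (g t)"
  shows "Measurable.pred M (\<lambda>t. \<exists>z. g t z = 0 \<and> dist w z < r)"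
proof -
  obtain dd :: "nat \<Rightarrow> 'a" where dd: "\<And>x e. e > 0 \<Longrightarrow> \<exists>i. dist (dd i) x < e"
    using dense_sequenceE by blast
  have "Measurable.pred M (\<lambda>t. \<exists>n::nat. \<forall>m::nat. \<exists>i.
      dist (dd i) w \<le> r - 1 / Suc n \<and> \<bar>g t (dd i)\<bar> < 1 / Suc m)"
    by measurable
  then show ?thesis
    by (rule measurable_cong[THEN iffD1, rotated])
      (rule ex_zero_near_iff_dense[OF g_cont dd, symmetric])
qed

lemma convergent_if_dist_Suc_summable:
  fixes a :: "nat \<Rightarrow> 'a::banach"
  assumes "summable e" and "\<And>k. dist (a (Suc k)) (a k) \<le> e k"
  shows "convergent a"
proof -
  have "summable (\<lambda>k. norm (a (Suc k) - a k))"
    by (rule summable_comparison_test[OF _ assms(1)]) (use assms(2) in \<open>simp add: dist_norm\<close>)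
  then have "summable (\<lambda>k. a (Suc k) - a k)" by (rule summable_norm_cancel)
  then have "convergent (\<lambda>k. a 0 + (\<Sum>j<k. a (Suc j) - a j))"
    by (simp add: convergent_add_const_iff summable_iff_convergent)
  then show ?thesis by (simp add: sum_lessThan_telescope)
qed

lemma limit_in_closed_if_near:
  fixes a :: "nat \<Rightarrow> 'a::metric_space"
  assumes "closed Z" "Z \<noteq> {}" "a \<longlonglongrightarrow> L" "e \<longlonglongrightarrow> 0" "\<And>k. \<exists>z\<in>Z. dist (a k) z < e k"
  shows "L \<in> Z"
proof -
  have "infdist (a k) Z \<le> e k" for k
    using assms(5)[of k] infdist_le[of _ Z "a k"] by (meson less_imp_le order_trans)
  then have "(\<lambda>k. infdist (a k) Z) \<longlonglongrightarrow> 0"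
    by (intro tendsto_sandwich[OF _ _ tendsto_const assms(4)]) (auto simp: infdist_nonneg)
  moreover have "(\<lambda>k. infdist (a k) Z) \<longlonglongrightarrow> infdist L Z"
    by (intro tendsto_infdist assms(3))
  ultimately have "infdist L Z = 0" using LIMSEQ_unique by blast
  then show ?thesis using in_closed_iff_infdist_zero[OF assms(1,2)] by simp
qed

text \<open>Successive approximation of a point of the closed set described by \<open>P a r\<close> (some point
  of the set lies within distance r of a), as in the Kuratowski--Ryll-Nardzewski theorem. The
  k-th index picks a point of the dense sequence within (1/2)^k of the set and within
  2 (1/2)^k of the previous one; choosing it by LEAST keeps it measurable when P depends
  measurably on a parameter.\<close>

primrec approx_index :: "(nat \<Rightarrow> 'a::metric_space) \<Rightarrow> ('a \<Rightarrow> real \<Rightarrow> bool) \<Rightarrow> nat \<Rightarrow> nat" where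
  "approx_index dd P 0 = (LEAST i. P (dd i) 1)"
| "approx_index dd P (Suc k) =
     (LEAST i. P (dd i) ((1/2) ^ Suc k) \<and> dist (dd i) (dd (approx_index dd P k)) < 2 * (1/2) ^ k)"

lemma approx_index_converges_into:
  fixes Z :: "'a::euclidean_space set"
  assumes "closed Z" "Z \<noteq> {}"
    and dd: "\<And>x e. e > 0 \<Longrightarrow> \<exists>i. dist (dd i) x < e"
    and P: "\<And>a r. P a r \<longleftrightarrow> (\<exists>z\<in>Z. dist a z < r)"
  defines "a \<equiv> \<lambda>k. dd (approx_index dd P k)"
  shows "convergent a" and "lim a \<in> Z"
proof -
  have step: "\<exists>i. P (dd i) ((1/2) ^ Suc k) \<and> dist (dd i) b < 2 * (1/2) ^ k"
    if b_near: "P b ((1/2) ^ k)" for b k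
  proof -
    obtain z where z: "z \<in> Z" "dist b z < (1/2) ^ k" using b_near unfolding P by blast
    obtain i where i: "dist (dd i) z < (1/2) ^ Suc k" using dd[of "(1/2) ^ Suc k" z] by auto
    have "dist (dd i) b \<le> dist (dd i) z + dist b z" by (rule dist_triangle2)
    also have "\<dots> < 2 * (1/2) ^ k" using i z zero_le_dist[of "dd i" z] by (simp only: power_Suc)
    finally show ?thesis using i z unfolding P by blast
  qed
  have near: "P (a k) ((1/2) ^ k)" for k
  proof (induction k)
    case 0
    obtain z where "z \<in> Z" using \<open>Z \<noteq> {}\<close> by blast
    then obtain i where "P (dd i) 1" using dd[of 1 z] P by auto
    then show ?case by (simp add: a_def LeastI[where P="\<lambda>i. P (dd i) 1"])
  next
    case (Suc k)
    from LeastI_ex[OF step[OF Suc]] show ?case by (simp add: a_def)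
  qed
  have "dist (a (Suc k)) (a k) \<le> 2 * (1/2) ^ k" for k
    using LeastI_ex[OF step[OF near[of k]]] by (simp add: a_def)
  then show conv: "convergent a"
    by (intro convergent_if_dist_Suc_summable[of "\<lambda>k. 2 * (1/2) ^ k"] summable_mult summable_geometric) auto
  have "(\<lambda>k. (1/2::real) ^ k) \<longlonglongrightarrow> 0" by (rule LIMSEQ_realpow_zero) auto
  with conv show "lim a \<in> Z"
    using near unfolding P convergent_LIMSEQ_iff
    by (intro limit_in_closed_if_near[OF \<open>closed Z\<close> \<open>Z \<noteq> {}\<close>]) auto
qed

lemma measurable_zero_selection:
  fixes g :: "'t \<Rightarrow> 'a::euclidean_space \<Rightarrow> real"
  assumes g_meas: "\<And>y. (\<lambda>t. g t y) \<in> borel_measurable M"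
    and g_cont: "\<And>t. t \<in> space M \<Longrightarrow> continuous_on UNIV (g t)"
    and g_zero: "\<And>t. t \<in> space M \<Longrightarrow> \<exists>z. g t z = 0"
  obtains u where "u \<in> borel_measurable M" "\<And>t. t \<in> space M \<Longrightarrow> g t (u t) = 0"
proof -
  obtain dd :: "nat \<Rightarrow> 'a" where dd: "\<And>x e. e > 0 \<Longrightarrow> \<exists>i. dist (dd i) x < e"
    using dense_sequenceE by blast
  define P where "P t w r \<longleftrightarrow> (\<exists>z. g t z = 0 \<and> dist w z < r)" for t w r
  define a where "a t = (\<lambda>k. dd (approx_index dd (P t) k))" for t
  have P_meas: "Measurable.pred M (\<lambda>t. P t w r)" for w r
    unfolding P_def by (rule pred_ex_zero_near[OF g_meas g_cont])
  have index_meas: "(\<lambda>t. approx_index dd (P t) k) \<in> M \<rightarrow>\<^sub>M count_space UNIV" for k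
  proof (induction k)
    case 0
    show ?case by (simp, intro measurable_Least P_meas)
  next
    case (Suc k)
    have "Measurable.pred M (\<lambda>t. dist (dd i) (dd (approx_index dd (P t) k)) < 2 * (1/2) ^ k)" for i
      by (rule measurable_compose_countable[OF _ Suc]) simp
    then show ?case by (simp, intro measurable_Least pred_intros_logic P_meas)
  qed
  have zeros: "closed {z. g t z = 0}" "{z. g t z = 0} \<noteq> {}" if "t \<in> space M" for t
    using closed_Collect_eq[OF g_cont[OF that] continuous_on_const] g_zero[OF that] by auto
  have a_conv: "convergent (a t)" and a_lim: "g t (lim (a t)) = 0" if "t \<in> space M" for t
    using approx_index_converges_into[OF zeros[OF that] dd, of "P t"] by (auto simp: P_def a_def)
  have a_meas: "(\<lambda>t. a t k) \<in> borel_measurable M" for k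
    unfolding a_def by (rule measurable_compose_countable[OF _ index_meas]) simp
  have "(\<lambda>t. lim (a t)) \<in> borel_measurable M"
    by (rule borel_measurable_LIMSEQ_metric[where f="\<lambda>k t. a t k", OF a_meas])
      (rule a_conv[unfolded convergent_LIMSEQ_iff])
  then show ?thesis using that a_lim by blast
qed

section \<open>Admissible trajectories\<close>

lemma loc_abs_cont_imp_continuous_on:
  assumes "loc_abs_cont x t0"
  shows "continuous_on {t0..} x"
  unfolding continuous_on_iff
proof (intro ballI allI impI)
  fix t e :: real assume t: "t \<in> {t0..}" and e: "e > 0"
  have "abs_cont_on x t0 (t + 1)" using assms t unfolding loc_abs_cont_def by auto
  then obtain \<delta> where "\<delta> > 0" and \<delta>: "\<And>(n::nat) (c::nat \<Rightarrow> real) (d::nat \<Rightarrow> real).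
        (\<forall>i<n. t0 \<le> c i \<and> c i \<le> d i \<and> d i \<le> t + 1) \<longrightarrow>
        (\<forall>i<n. \<forall>j<n. i \<noteq> j \<longrightarrow> d i \<le> c j \<or> d j \<le> c i) \<longrightarrow>
        (\<Sum>i<n. d i - c i) < \<delta> \<longrightarrow>
        (\<Sum>i<n. norm (x (d i) - x (c i))) < e"
    unfolding abs_cont_on_def using e by blast
  show "\<exists>d>0. \<forall>t'\<in>{t0..}. dist t' t < d \<longrightarrow> dist (x t') (x t) < e"
  proof (intro exI[of _ "min \<delta> 1"] conjI ballI impI)
    show "0 < min \<delta> 1" using \<open>\<delta> > 0\<close> by simp
    fix t' assume t': "t' \<in> {t0..}" and dt: "dist t' t < min \<delta> 1"
    have "norm (x (max t t') - x (min t t')) < e"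
      using \<delta>[of 1 "\<lambda>_. min t t'" "\<lambda>_. max t t'"] t t' dt
      by (auto simp: dist_real_def split: if_splits)
    then show "dist (x t') (x t) < e"
      by (cases "t \<le> t'") (auto simp: dist_norm norm_minus_commute max_def min_def)
  qed
qed

lemma loc_abs_cont_imp_measurable:
  "loc_abs_cont x t0 \<Longrightarrow> x \<in> borel_measurable (lebesgue_on {t0..})"
  by (intro continuous_imp_measurable_on_sets_lebesgue loc_abs_cont_imp_continuous_on) auto

lemma borel_measurable_lebesgue_on_AE_cong:
  assumes g: "g \<in> borel_measurable (lebesgue_on S)" and S: "S \<in> sets lebesgue"
    and eq: "AE t in lebesgue. t \<in> S \<longrightarrow> g' t = g t"
  shows "g' \<in> borel_measurable (lebesgue_on S)"
proof (rule measurableI)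
  from eq obtain N where N: "N \<in> null_sets lebesgue" "\<And>t. t \<in> S \<Longrightarrow> t \<notin> N \<Longrightarrow> g' t = g t"
    by (auto simp: completion.AE_iff_null_sets)
  fix B :: "'b set" assume B: "B \<in> sets borel"
  have "g -` B \<inter> S \<in> sets lebesgue"
    using measurable_sets[OF g B] S by (simp add: sets_restrict_space_iff)
  moreover have "g' -` B \<inter> S \<inter> N \<in> sets lebesgue"
    using completion.complete2[OF _ N(1)] by blast
  moreover have "g' -` B \<inter> S = (g -` B \<inter> S - N) \<union> (g' -` B \<inter> S \<inter> N)" using N(2) by auto
  ultimately have "g' -` B \<inter> S \<in> sets lebesgue"
    by (metis N(1) null_setsD2 sets.Diff sets.Un)
  then show "g' -` B \<inter> space (lebesgue_on S) \<in> sets (lebesgue_on S)"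
    using S by (simp add: sets_restrict_space_iff)
qed auto

lemma difference_quotients_tendsto_vector_derivative:
  fixes x :: "real \<Rightarrow> 'a::real_normed_vector"
  assumes "x differentiable (at t)"
  shows "(\<lambda>k. real (Suc k) *\<^sub>R (x (t + 1 / Suc k) - x t)) \<longlonglongrightarrow> vector_derivative x (at t)"
proof -
  define v where "v = vector_derivative x (at t)"
  define h where "h k = 1 / real (Suc k)" for k
  have "(x has_derivative (\<lambda>h. h *\<^sub>R v)) (at t)"
    using vector_derivative_works[THEN iffD1, OF assms] by (simp add: v_def has_vector_derivative_def)
  then have "((\<lambda>h. norm (x (t + h) - x t - h *\<^sub>R v) / norm h) \<longlongrightarrow> 0) (at 0)"
    by (simp add: has_derivative_at)
  moreover have "filterlim h (at 0) sequentially"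
    unfolding filterlim_at h_def using LIMSEQ_inverse_real_of_nat by (simp add: inverse_eq_divide)
  ultimately have "(\<lambda>k. norm (x (t + h k) - x t - h k *\<^sub>R v) / norm (h k)) \<longlonglongrightarrow> 0"
    by (rule filterlim_compose)
  moreover have "norm (x (t + h k) - x t - h k *\<^sub>R v) / norm (h k)
      = norm (real (Suc k) *\<^sub>R (x (t + 1 / Suc k) - x t) - v)" for k
  proof -
    have "norm (x (t + h k) - x t - h k *\<^sub>R v) / norm (h k)
        = norm ((1 / h k) *\<^sub>R (x (t + h k) - x t - h k *\<^sub>R v))"
      by (simp add: h_def divide_inverse)
    also have "(1 / h k) *\<^sub>R (x (t + h k) - x t - h k *\<^sub>R v) = real (Suc k) *\<^sub>R (x (t + 1 / Suc k) - x t) - v"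
      by (simp add: h_def algebra_simps)
    finally show ?thesis .
  qed
  ultimately show ?thesis unfolding v_def by (simp add: LIM_zero_iff tendsto_norm_zero_iff)
qed

lemma borel_measurable_vector_derivative_on:
  fixes x :: "real \<Rightarrow> 'a::euclidean_space"
  assumes x_cont: "continuous_on {t0..} x" and G: "G \<subseteq> {t0..}" "G \<in> sets lebesgue"
    and x_diff: "\<And>t. t \<in> G \<Longrightarrow> x differentiable (at t)"
  shows "(\<lambda>t. if t \<in> G then vector_derivative x (at t) else 0) \<in> borel_measurable (lebesgue_on {t0..})"
proof (rule borel_measurable_LIMSEQ_metric)
  fix k :: nat
  have "continuous_on {t0..} (\<lambda>t. real (Suc k) *\<^sub>R (x (t + 1 / Suc k) - x t))"
    by (intro continuous_intros continuous_on_compose2[OF x_cont] x_cont) (auto simp: add_increasing2)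
  then show "(\<lambda>t. if t \<in> G then real (Suc k) *\<^sub>R (x (t + 1 / Suc k) - x t) else 0)
      \<in> borel_measurable (lebesgue_on {t0..})"
    using G by (intro measurable_If_set continuous_imp_measurable_on_sets_lebesgue)
      (auto simp: sets_restrict_space_iff Int_absorb2)
next
  fix t assume "t \<in> space (lebesgue_on {t0..})"
  show "(\<lambda>k. if t \<in> G then real (Suc k) *\<^sub>R (x (t + 1 / Suc k) - x t) else 0)
      \<longlonglongrightarrow> (if t \<in> G then vector_derivative x (at t) else 0)"
    using difference_quotients_tendsto_vector_derivative[OF x_diff] by (cases "t \<in> G") auto
qed

lemma S_H_regular_set:
  assumes "x \<in> S_H H A t0 x0"
  obtains G where "G \<subseteq> {t0..}" "G \<in> sets lebesgue" "AE t in lebesgue. t \<in> {t0..} \<longrightarrow> t \<in> G"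
    "\<And>t. t \<in> G \<Longrightarrow> x differentiable (at t) \<and> vector_derivative x (at t) \<in> domHstar H t (x t)"
proof -
  from assms have "AE t in lebesgue. t \<in> {t0..} \<longrightarrow>
      x differentiable (at t) \<and> vector_derivative x (at t) \<in> domHstar H t (x t)"
    unfolding S_H_def by blast
  then obtain N where N: "N \<in> null_sets lebesgue" and "\<And>t. t \<in> {t0..} \<Longrightarrow> t \<notin> N \<Longrightarrow>
      x differentiable (at t) \<and> vector_derivative x (at t) \<in> domHstar H t (x t)"
    by (auto simp: completion.AE_iff_null_sets)
  moreover have "{t0..} - N \<in> sets lebesgue" using N by (intro sets.Diff) auto
  moreover have "AE t in lebesgue. t \<in> {t0..} \<longrightarrow> t \<in> {t0..} - N"
    by (rule AE_I'[OF N]) auto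
  ultimately show ?thesis using that[of "{t0..} - N"] by auto
qed

lemma S_H_vector_derivative_measurable:
  assumes "x \<in> S_H H A t0 x0"
  shows "(\<lambda>t. vector_derivative x (at t)) \<in> borel_measurable (lebesgue_on {t0..})"
proof -
  obtain G where G: "G \<subseteq> {t0..}" "G \<in> sets lebesgue" "AE t in lebesgue. t \<in> {t0..} \<longrightarrow> t \<in> G"
    and x_diff: "\<And>t. t \<in> G \<Longrightarrow> x differentiable (at t)"
    using S_H_regular_set[OF assms] by metis
  have "continuous_on {t0..} x"
    using assms by (intro loc_abs_cont_imp_continuous_on) (simp add: S_H_def)
  from borel_measurable_vector_derivative_on[OF this G(1,2) x_diff]
  show ?thesis
    by (rule borel_measurable_lebesgue_on_AE_cong) (use G(3) in auto)
qed

section \<open>Measurability of the conjugate, Filippov's lemma, extended integrals\<close>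

lemma SUP_dense_sequence_eq:
  fixes g :: "'a::metric_space \<Rightarrow> real"
  assumes g_cont: "continuous_on UNIV g" and dd: "\<And>x e. e > 0 \<Longrightarrow> \<exists>i. dist (dd i) x < e"
  shows "(SUP i. ereal (g (dd i))) = (SUP p. ereal (g p))"
proof (rule antisym)
  show "(SUP i. ereal (g (dd i))) \<le> (SUP p. ereal (g p))" by (rule SUP_mono) blast
  show "(SUP p. ereal (g p)) \<le> (SUP i. ereal (g (dd i)))"
  proof (rule SUP_least, rule ereal_le_epsilon2)
    fix p and e :: real assume "e > 0"
    have "isCont g p" using g_cont by (simp add: continuous_on_eq_continuous_at)
    then obtain \<delta> where "\<delta> > 0" and \<delta>: "\<And>q. dist q p < \<delta> \<Longrightarrow> dist (g q) (g p) < e"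
      unfolding continuous_at_eps_delta using \<open>e > 0\<close> by blast
    obtain i where "dist (dd i) p < \<delta>" using dd \<open>\<delta> > 0\<close> by blast
    then have "\<bar>g (dd i) - g p\<bar> < e" using \<delta> by (simp add: dist_real_def)
    then have "ereal (g p) \<le> ereal (g (dd i)) + ereal e" by (simp add: abs_less_iff)
    also have "\<dots> \<le> (SUP i. ereal (g (dd i))) + ereal e"
      by (intro add_right_mono SUP_upper) simp
    finally show "ereal (g p) \<le> (SUP i. ereal (g (dd i))) + ereal e" .
  qed
qed

lemma Hstar_ge_neg_H0: "Hstar H t y v \<ge> ereal (- H t y 0)"
  unfolding Hstar_def by (rule SUP_upper2[of 0]) auto

lemma borel_measurable_Hstar:
  fixes H :: "real \<Rightarrow> 'n::euclidean_space \<Rightarrow> 'n \<Rightarrow> real"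
  assumes H_meas: "\<And>y p. (\<lambda>t. H t y p) \<in> borel_measurable M"
    and H_cont_x: "\<And>t p. t \<in> space M \<Longrightarrow> continuous_on UNIV (\<lambda>y. H t y p)"
    and H_cont_p: "\<And>t y. t \<in> space M \<Longrightarrow> continuous_on UNIV (H t y)"
    and y_meas: "y \<in> borel_measurable M" and v_meas: "v \<in> borel_measurable M"
  shows "(\<lambda>t. Hstar H t (y t) (v t)) \<in> borel_measurable M"
proof -
  obtain dd :: "nat \<Rightarrow> 'n" where dd: "\<And>x e. e > 0 \<Longrightarrow> \<exists>i. dist (dd i) x < e"
    using dense_sequenceE by blast
  have "(\<lambda>t. H t (y t) (dd i)) \<in> borel_measurable M" for i
    by (rule borel_measurable_Caratheodory_comp[of "\<lambda>t z. H t z (dd i)", OF H_meas H_cont_x y_meas])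
  then have "(\<lambda>t. SUP i. ereal (inner (v t) (dd i) - H t (y t) (dd i))) \<in> borel_measurable M"
    using v_meas by measurable
  moreover have "Hstar H t (y t) (v t) = (SUP i. ereal (inner (v t) (dd i) - H t (y t) (dd i)))"
    if "t \<in> space M" for t
    unfolding Hstar_def
    by (rule SUP_dense_sequence_eq[symmetric, OF _ dd]) (intro continuous_intros H_cont_p that)
  ultimately show ?thesis by (simp cong: measurable_cong)
qed

lemma borel_measurable_infdist_multifun:
  fixes U :: "real \<Rightarrow> 'm::euclidean_space set"
  assumes U_meas: "measurable_multifun U" and U_ne: "\<And>t. t \<ge> 0 \<Longrightarrow> U t \<noteq> {}" and "t0 \<ge> 0"
  shows "(\<lambda>t. infdist w (U t)) \<in> borel_measurable (lebesgue_on {t0..})"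
  unfolding borel_measurable_iff_less
proof
  fix a :: real
  have "infdist w (U t) < a \<longleftrightarrow> U t \<inter> ball w a \<noteq> {}" if "t \<ge> t0" for t
  proof -
    have ne: "U t \<noteq> {}" using U_ne that \<open>t0 \<ge> 0\<close> by simp
    have "infdist w (U t) < a \<longleftrightarrow> (\<exists>z\<in>U t. dist w z < a)"
      unfolding infdist_notempty[OF ne] by (subst cINF_less_iff) (auto simp: ne intro: bdd_belowI2[of _ 0])
    then show ?thesis by auto
  qed
  then have "{t \<in> space (lebesgue_on {t0..}). infdist w (U t) < a}
      = {t0..} \<inter> {t\<in>{0..}. U t \<inter> ball w a \<noteq> {}}"
    using \<open>t0 \<ge> 0\<close> by auto
  moreover have "{t0..} \<inter> {t\<in>{0..}. U t \<inter> ball w a \<noteq> {}} \<in> sets lebesgue"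
    using U_meas unfolding measurable_multifun_def by (intro sets.Int) auto
  ultimately show "{t \<in> space (lebesgue_on {t0..}). infdist w (U t) < a} \<in> sets (lebesgue_on {t0..})"
    by (simp add: sets_restrict_space_iff)
qed

lemma Filippov_selection:
  fixes g :: "real \<Rightarrow> 'm::euclidean_space \<Rightarrow> 'a::euclidean_space"
  assumes U_meas: "measurable_multifun U" and U_ne: "\<And>t. t \<ge> 0 \<Longrightarrow> U t \<noteq> {}"
    and U_closed: "\<And>t. t \<ge> 0 \<Longrightarrow> closed (U t)" and "t0 \<ge> 0"
    and g_meas: "\<And>p. (\<lambda>t. g t p) \<in> borel_measurable (lebesgue_on {t0..})"
    and g_cont: "\<And>t. t \<ge> t0 \<Longrightarrow> continuous_on UNIV (g t)"
    and y_meas: "y \<in> borel_measurable (lebesgue_on {t0..})"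
    and G: "G \<subseteq> {t0..}" "G \<in> sets lebesgue"
    and solvable: "\<And>t. t \<in> G \<Longrightarrow> \<exists>p\<in>U t. g t p = y t"
  obtains u where "u \<in> borel_measurable (lebesgue_on {t0..})"
    "\<And>t. t \<in> G \<Longrightarrow> u t \<in> U t \<and> g t (u t) = y t"
proof -
  \<comment> \<open>For t in G the zeros of \<open>\<psi> t\<close> are exactly the admissible solutions, as U t is closed.\<close>
  define \<psi> where "\<psi> t p = (if t \<in> G then infdist p (U t) + dist (g t p) (y t) else 0)" for t p
  have "(\<lambda>t. \<psi> t p) \<in> borel_measurable (lebesgue_on {t0..})" for p
    unfolding \<psi>_def using G
    by (intro measurable_If_set borel_measurable_add borel_measurable_dist g_meas y_meas
        borel_measurable_infdist_multifun[OF U_meas U_ne \<open>t0 \<ge> 0\<close>])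
      (auto simp: sets_restrict_space_iff)
  moreover have "continuous_on UNIV (\<psi> t)" if "t \<in> space (lebesgue_on {t0..})" for t
  proof (cases "t \<in> G")
    case True
    then show ?thesis
      using g_cont[of t] that unfolding \<psi>_def by (simp, intro continuous_intros)
  qed (simp add: \<psi>_def)
  moreover have "\<exists>p. \<psi> t p = 0" for t
  proof (cases "t \<in> G")
    case True
    then obtain p where "p \<in> U t" "g t p = y t" using solvable by blast
    then show ?thesis using True by (intro exI[of _ p]) (simp add: \<psi>_def)
  qed (simp add: \<psi>_def)
  ultimately obtain u where u_meas: "u \<in> borel_measurable (lebesgue_on {t0..})"
    and u_zero: "\<And>t. t \<in> space (lebesgue_on {t0..}) \<Longrightarrow> \<psi> t (u t) = 0"
    using measurable_zero_selection by metis
  have "u t \<in> U t \<and> g t (u t) = y t" if "t \<in> G" for t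
  proof -
    have "infdist (u t) (U t) + dist (g t (u t)) (y t) = 0"
      using u_zero[of t] that G by (auto simp: \<psi>_def)
    then have "infdist (u t) (U t) = 0" "dist (g t (u t)) (y t) = 0"
      using infdist_nonneg[of "u t" "U t"] zero_le_dist[of "g t (u t)" "y t"] by linarith+
    moreover have "t \<ge> 0" using that G \<open>t0 \<ge> 0\<close> by auto
    ultimately show ?thesis
      using in_closed_iff_infdist_zero[OF U_closed U_ne] by simp
  qed
  with u_meas show ?thesis using that by blast
qed

lemma ext_integral_mono:
  assumes "AE t in lebesgue. t \<in> S \<longrightarrow> g t \<le> g' t"
  shows "ext_integral S g \<le> ext_integral S g'"
proof -
  have "(\<integral>\<^sup>+ t. e2ennreal (max 0 (g t)) * indicator S t \<partial>lebesgue)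
      \<le> (\<integral>\<^sup>+ t. e2ennreal (max 0 (g' t)) * indicator S t \<partial>lebesgue)"
    by (rule nn_integral_mono_AE, rule eventually_mono[OF assms])
      (auto split: split_indicator intro!: e2ennreal_mono simp: le_max_iff_disj)
  moreover have "(\<integral>\<^sup>+ t. e2ennreal (max 0 (- g' t)) * indicator S t \<partial>lebesgue)
      \<le> (\<integral>\<^sup>+ t. e2ennreal (max 0 (- g t)) * indicator S t \<partial>lebesgue)"
    by (rule nn_integral_mono_AE, rule eventually_mono[OF assms])
      (auto split: split_indicator intro!: e2ennreal_mono simp: le_max_iff_disj)
  ultimately
  show ?thesis unfolding ext_integral_def
    by (intro ereal_minus_mono) (simp_all add: less_eq_ennreal.rep_eq)
qed

lemma ext_integral_cong:
  assumes "AE t in lebesgue. t \<in> S \<longrightarrow> g t = g' t"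
  shows "ext_integral S g = ext_integral S g'"
  by (rule antisym; rule ext_integral_mono; rule eventually_mono[OF assms]) auto

lemma negative_part_integral_finite:
  fixes g :: "real \<Rightarrow> ereal"
  assumes \<phi>_int: "integrable (lebesgue_on {0..}) \<phi>" and "t0 \<ge> 0"
    and g_ge: "\<And>t. t \<ge> t0 \<Longrightarrow> g t \<ge> ereal (\<phi> t)"
  shows "(\<integral>\<^sup>+ t. e2ennreal (max 0 (- g t)) * indicator {t0..} t \<partial>lebesgue) < \<infinity>"
proof -
  have "e2ennreal (max 0 (- g t)) * indicator {t0..} t \<le> ennreal (norm (\<phi> t)) * indicator {0..} t"
    for t :: real
  proof (cases "t \<ge> t0")
    case True
    have "max 0 (- g t) \<le> ereal (norm (\<phi> t))"
      using g_ge[OF True] by (cases "g t") auto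
    then have "e2ennreal (max 0 (- g t)) \<le> ennreal (norm (\<phi> t))"
      using e2ennreal_mono by fastforce
    then show ?thesis using True \<open>t0 \<ge> 0\<close> by (simp add: indicator_def)
  qed simp
  then have "(\<integral>\<^sup>+ t. e2ennreal (max 0 (- g t)) * indicator {t0..} t \<partial>lebesgue)
      \<le> (\<integral>\<^sup>+ t. ennreal (norm (\<phi> t)) \<partial>lebesgue_on {0..})"
    by (simp add: nn_integral_restrict_space nn_integral_mono)
  also have "\<dots> < \<infinity>" using \<phi>_int by (simp add: integrable_iff_bounded)
  finally show ?thesis .
qed

section \<open>Epigraphical representations\<close>

locale epigraphical_representation =
  fixes U :: "real \<Rightarrow> 'm::euclidean_space set"
    and H :: "real \<Rightarrow> 'n::euclidean_space \<Rightarrow> 'n \<Rightarrow> real"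
    and f :: "real \<Rightarrow> 'n \<Rightarrow> 'm \<Rightarrow> 'n"
    and l :: "real \<Rightarrow> 'n \<Rightarrow> 'm \<Rightarrow> real"
    and \<phi> \<phi>1 :: "real \<Rightarrow> real"
  assumes U_meas: "measurable_multifun U"
    and U_ne: "\<And>t. t \<ge> 0 \<Longrightarrow> U t \<noteq> {}"
    and U_closed: "\<And>t. t \<ge> 0 \<Longrightarrow> closed (U t)"
    and H_meas: "\<And>x p. (\<lambda>t. H t x p) \<in> borel_measurable (lebesgue_on {0..})"
    and H_cont: "\<And>t p. t \<ge> 0 \<Longrightarrow> continuous_on UNIV (\<lambda>x. H t x p)"
    and H_conv: "\<And>t x. t \<ge> 0 \<Longrightarrow> convex_on UNIV (\<lambda>p. H t x p)"
    and \<phi>_int: "integrable (lebesgue_on {0..}) \<phi>"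
    and H_zero: "\<And>t x. t \<ge> 0 \<Longrightarrow> H t x 0 \<le> - \<phi> t"
    and f_meas: "\<And>x u. (\<lambda>t. f t x u) \<in> borel_measurable (lebesgue_on {0..})"
    and l_meas: "\<And>x u. (\<lambda>t. l t x u) \<in> borel_measurable (lebesgue_on {0..})"
    and f_cont: "\<And>t. t \<ge> 0 \<Longrightarrow> continuous_on UNIV (\<lambda>(x, u). f t x u)"
    and l_cont: "\<And>t. t \<ge> 0 \<Longrightarrow> continuous_on UNIV (\<lambda>(x, u). l t x u)"
    and \<phi>1_int: "integrable (lebesgue_on {0..}) \<phi>1"
    and l_bound: "\<And>t x u. t \<ge> 0 \<Longrightarrow> l t x u \<ge> \<phi>1 t"
    and epi_rep: "\<And>t x. t \<ge> 0 \<Longrightarrow>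
        gphHstar H t x \<subseteq> (\<lambda>u. (f t x u, l t x u)) ` U t \<and>
        (\<lambda>u. (f t x u, l t x u)) ` U t \<subseteq> epiHstar H t x"
begin

lemma Hstar_ge_phi:
  assumes "t \<ge> 0"
  shows "Hstar H t y v \<ge> ereal (\<phi> t)"
proof -
  have "ereal (\<phi> t) \<le> ereal (- H t y 0)" using H_zero[OF assms, of y] by simp
  then show ?thesis using Hstar_ge_neg_H0 by (rule order_trans)
qed

lemma Hstar_eq_real_of_ereal:
  assumes "t \<ge> 0" "v \<in> domHstar H t y"
  shows "Hstar H t y v = ereal (real_of_ereal (Hstar H t y v))"
  using Hstar_ge_phi[OF assms(1), of y v] assms(2) unfolding domHstar_def
  by (cases "Hstar H t y v") auto

lemma borel_measurable_dynamics:
  assumes "t0 \<ge> 0" and y_meas: "y \<in> borel_measurable (lebesgue_on {t0..})"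
    and v_meas: "v \<in> borel_measurable (lebesgue_on {t0..})"
  shows "(\<lambda>t. f t (y t) (v t)) \<in> borel_measurable (lebesgue_on {t0..})"
    and "(\<lambda>t. l t (y t) (v t)) \<in> borel_measurable (lebesgue_on {t0..})"
proof -
  have sub: "{t0..} \<subseteq> {0..}" using \<open>t0 \<ge> 0\<close> by auto
  have yv_meas: "(\<lambda>t. (y t, v t)) \<in> borel_measurable (lebesgue_on {t0..})"
    using y_meas v_meas by measurable
  have "(\<lambda>t. (\<lambda>(a, b). f t a b) (y t, v t)) \<in> borel_measurable (lebesgue_on {t0..})"
    by (rule borel_measurable_Caratheodory_comp[OF _ _ yv_meas])
      (use measurable_restrict_mono[OF f_meas sub] f_cont \<open>t0 \<ge> 0\<close> in auto)
  then show "(\<lambda>t. f t (y t) (v t)) \<in> borel_measurable (lebesgue_on {t0..})" by simp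
  have "(\<lambda>t. (\<lambda>(a, b). l t a b) (y t, v t)) \<in> borel_measurable (lebesgue_on {t0..})"
    by (rule borel_measurable_Caratheodory_comp[OF _ _ yv_meas])
      (use measurable_restrict_mono[OF l_meas sub] l_cont \<open>t0 \<ge> 0\<close> in auto)
  then show "(\<lambda>t. l t (y t) (v t)) \<in> borel_measurable (lebesgue_on {t0..})" by simp
qed

lemma continuous_on_dynamics_control:
  assumes "t \<ge> 0"
  shows "continuous_on UNIV (\<lambda>p. (f t y p, l t y p))"
proof -
  have Pair_cont: "continuous_on UNIV (Pair y)" by (intro continuous_intros)
  have "continuous_on UNIV ((\<lambda>(a, b). f t a b) \<circ> Pair y)"
    by (rule continuous_on_compose[OF Pair_cont continuous_on_subset[OF f_cont[OF assms] subset_UNIV]])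
  moreover have "continuous_on UNIV ((\<lambda>(a, b). l t a b) \<circ> Pair y)"
    by (rule continuous_on_compose[OF Pair_cont continuous_on_subset[OF l_cont[OF assms] subset_UNIV]])
  ultimately show ?thesis by (simp add: o_def continuous_on_Pair)
qed

lemma Hstar_derivative_measurable:
  assumes "t0 \<ge> 0" "x \<in> S_H H A t0 x0"
  shows "(\<lambda>t. Hstar H t (x t) (vector_derivative x (at t))) \<in> borel_measurable (lebesgue_on {t0..})"
proof (rule borel_measurable_Hstar)
  have "{t0..} \<subseteq> {0..}" using \<open>t0 \<ge> 0\<close> by auto
  then show "(\<lambda>t. H t y p) \<in> borel_measurable (lebesgue_on {t0..})" for y p
    by (rule measurable_restrict_mono[OF H_meas])
  show "x \<in> borel_measurable (lebesgue_on {t0..})"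
    using assms(2) by (intro loc_abs_cont_imp_measurable) (simp add: S_H_def)
  show "(\<lambda>t. vector_derivative x (at t)) \<in> borel_measurable (lebesgue_on {t0..})"
    by (rule S_H_vector_derivative_measurable[OF assms(2)])
qed (use assms(1) H_cont convex_on_continuous[OF open_UNIV H_conv] in auto)

lemma integral_well_defined_Hstar:
  assumes "t0 \<ge> 0" "x \<in> S_H H A t0 x0"
  shows "integral_well_defined {t0..} (\<lambda>t. Hstar H t (x t) (vector_derivative x (at t)))"
  unfolding integral_well_defined_def
  by (intro conjI Hstar_derivative_measurable[OF assms] negative_part_integral_finite[OF \<phi>_int assms(1)])
    (use Hstar_ge_phi assms(1) in auto)

lemma integral_well_defined_running_cost:
  assumes "t0 \<ge> 0" "(x, u) \<in> S_f f U A t0 x0"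
  shows "integral_well_defined {t0..} (\<lambda>t. ereal (l t (x t) (u t)))"
proof -
  have "x \<in> borel_measurable (lebesgue_on {t0..})" "u \<in> borel_measurable (lebesgue_on {t0..})"
    using assms(2) loc_abs_cont_imp_measurable unfolding S_f_def by auto
  then have "(\<lambda>t. ereal (l t (x t) (u t))) \<in> borel_measurable (lebesgue_on {t0..})"
    using borel_measurable_dynamics(2)[OF assms(1)] by measurable
  then show ?thesis unfolding integral_well_defined_def
    by (intro conjI negative_part_integral_finite[OF \<phi>1_int assms(1)]) (use l_bound assms(1) in auto)
qed

lemma S_f_imp_S_H_cost_le:
  assumes "t0 \<ge> 0" "(x, u) \<in> S_f f U A t0 x0"
  shows "x \<in> S_H H A t0 x0" and "cost_H H t0 x \<le> cost_f l t0 x u"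
proof -
  from assms(2) have ae: "AE t in lebesgue. t \<in> {t0..} \<longrightarrow>
      (x has_vector_derivative f t (x t) (u t)) (at t) \<and> u t \<in> U t"
    unfolding S_f_def by auto
  have "x differentiable (at t) \<and> vector_derivative x (at t) = f t (x t) (u t) \<and>
      Hstar H t (x t) (vector_derivative x (at t)) \<le> ereal (l t (x t) (u t))"
    if "t \<in> {t0..}" "(x has_vector_derivative f t (x t) (u t)) (at t)" "u t \<in> U t" for t
  proof -
    have "(f t (x t) (u t), l t (x t) (u t)) \<in> epiHstar H t (x t)"
      using epi_rep[of t "x t"] that assms(1) by auto
    then show ?thesis
      using that(2) vector_derivative_at differentiableI_vector by (fastforce simp: epiHstar_def)
  qed
  then have along: "AE t in lebesgue. t \<in> {t0..} \<longrightarrow> x differentiable (at t) \<and>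
      Hstar H t (x t) (vector_derivative x (at t)) \<le> ereal (l t (x t) (u t))"
    using ae by (auto elim!: eventually_mono)
  then have "AE t in lebesgue. t \<in> {t0..} \<longrightarrow> x differentiable (at t) \<and>
      vector_derivative x (at t) \<in> domHstar H t (x t)"
    by (auto elim!: eventually_mono simp: domHstar_def intro: le_less_trans[OF _ ereal_less_PInfty])
  with assms(2) show "x \<in> S_H H A t0 x0" unfolding S_H_def S_f_def by auto
  show "cost_H H t0 x \<le> cost_f l t0 x u"
    unfolding cost_H_def cost_f_def by (rule ext_integral_mono) (use along in \<open>auto elim: eventually_mono\<close>)
qed

lemma S_H_imp_S_f_cost_eq:
  assumes "t0 \<ge> 0" and x: "x \<in> S_H H A t0 x0"
  obtains u where "(x, u) \<in> S_f f U A t0 x0" and "cost_f l t0 x u = cost_H H t0 x"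
proof -
  obtain G where G: "G \<subseteq> {t0..}" "G \<in> sets lebesgue" "AE t in lebesgue. t \<in> {t0..} \<longrightarrow> t \<in> G"
    and G_reg: "\<And>t. t \<in> G \<Longrightarrow> x differentiable (at t) \<and> vector_derivative x (at t) \<in> domHstar H t (x t)"
    using S_H_regular_set[OF x] by metis
  define v where "v t = vector_derivative x (at t)" for t
  define r where "r t = real_of_ereal (Hstar H t (x t) (v t))" for t
  have Hstar_r: "Hstar H t (x t) (v t) = ereal (r t)" if "t \<in> G" for t
    using Hstar_eq_real_of_ereal G_reg[OF that] G(1) \<open>t0 \<ge> 0\<close> that by (auto simp: r_def v_def)
  have x_meas: "x \<in> borel_measurable (lebesgue_on {t0..})"
    using x by (intro loc_abs_cont_imp_measurable) (simp add: S_H_def)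
  have "(\<lambda>t. (v t, r t)) \<in> borel_measurable (lebesgue_on {t0..})"
    using S_H_vector_derivative_measurable[OF x] Hstar_derivative_measurable[OF assms]
    unfolding v_def r_def by measurable
  moreover have "\<exists>p\<in>U t. (f t (x t) p, l t (x t) p) = (v t, r t)" if "t \<in> G" for t
  proof -
    have "(v t, r t) \<in> gphHstar H t (x t)"
      using G_reg[OF that] Hstar_r[OF that] unfolding gphHstar_def v_def by simp
    then show ?thesis using epi_rep[of t "x t"] G(1) \<open>t0 \<ge> 0\<close> that by force
  qed
  ultimately obtain u where u_meas: "u \<in> borel_measurable (lebesgue_on {t0..})"
    and u: "\<And>t. t \<in> G \<Longrightarrow> u t \<in> U t \<and> (f t (x t) (u t), l t (x t) (u t)) = (v t, r t)"
    using Filippov_selection[OF U_meas U_ne U_closed \<open>t0 \<ge> 0\<close> _ _ _ G(1,2),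
        of "\<lambda>t p. (f t (x t) p, l t (x t) p)" "\<lambda>t. (v t, r t)"]
      borel_measurable_dynamics[OF \<open>t0 \<ge> 0\<close> x_meas] continuous_on_dynamics_control \<open>t0 \<ge> 0\<close>
    by (auto simp: measurable_pair_iff)
  have "(x has_vector_derivative f t (x t) (u t)) (at t) \<and> u t \<in> U t" if "t \<in> G" for t
    using u[OF that] G_reg[OF that] vector_derivative_works by (auto simp: v_def)
  then have "(x, u) \<in> S_f f U A t0 x0"
    using x u_meas G(3) unfolding S_H_def S_f_def by (auto elim!: eventually_mono)
  moreover have "cost_f l t0 x u = cost_H H t0 x"
    unfolding cost_f_def cost_H_def
    by (rule ext_integral_cong) (use G(3) u Hstar_r in \<open>auto elim!: eventually_mono simp: v_def\<close>)
  ultimately show ?thesis using that by blast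
qed

lemma V_H_eq_V_f:
  assumes "t0 \<ge> 0"
  shows "V_H H A t0 x0 = V_f f l U A t0 x0"
proof (rule antisym)
  show "V_H H A t0 x0 \<le> V_f f l U A t0 x0"
    unfolding V_f_def
  proof (rule INF_greatest, clarify)
    fix x u assume xu: "(x, u) \<in> S_f f U A t0 x0"
    have "V_H H A t0 x0 \<le> cost_H H t0 x"
      unfolding V_H_def using S_f_imp_S_H_cost_le(1)[OF assms xu] by (rule INF_lower)
    also have "\<dots> \<le> cost_f l t0 x u" by (rule S_f_imp_S_H_cost_le(2)[OF assms xu])
    finally show "V_H H A t0 x0 \<le> cost_f l t0 (fst (x, u)) (snd (x, u))" by simp
  qed
  show "V_f f l U A t0 x0 \<le> V_H H A t0 x0"
    unfolding V_H_def
  proof (rule INF_greatest)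
    fix x assume "x \<in> S_H H A t0 x0"
    then obtain u where u: "(x, u) \<in> S_f f U A t0 x0" "cost_f l t0 x u = cost_H H t0 x"
      using S_H_imp_S_f_cost_eq[OF assms] by blast
    have "V_f f l U A t0 x0 \<le> cost_f l t0 (fst (x, u)) (snd (x, u))"
      unfolding V_f_def using u(1) by (rule INF_lower)
    then show "V_f f l U A t0 x0 \<le> cost_H H t0 x" using u(2) by simp
  qed
qed

lemma optimal_trajectory_imp_optimal_pair:
  assumes "t0 \<ge> 0" "x \<in> S_H H A t0 x0" "cost_H H t0 x = V_H H A t0 x0"
  shows "\<exists>u. (x, u) \<in> S_f f U A t0 x0 \<and> cost_f l t0 x u = V_f f l U A t0 x0"
proof -
  obtain u where "(x, u) \<in> S_f f U A t0 x0" "cost_f l t0 x u = cost_H H t0 x"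
    using S_H_imp_S_f_cost_eq[OF assms(1,2)] by blast
  then show ?thesis using assms(3) V_H_eq_V_f[OF assms(1)] by auto
qed

lemma optimal_pair_imp_optimal_trajectory:
  assumes "t0 \<ge> 0" "(x, u) \<in> S_f f U A t0 x0" "cost_f l t0 x u = V_f f l U A t0 x0"
  shows "x \<in> S_H H A t0 x0" and "cost_H H t0 x = V_H H A t0 x0"
proof -
  show x: "x \<in> S_H H A t0 x0" by (rule S_f_imp_S_H_cost_le[OF assms(1,2)])
  have "V_H H A t0 x0 \<le> cost_H H t0 x"
    unfolding V_H_def using x by (rule INF_lower)
  also have "\<dots> \<le> V_H H A t0 x0"
    using S_f_imp_S_H_cost_le(2)[OF assms(1,2)] assms(3) V_H_eq_V_f[OF assms(1)] by simp
  finally show "cost_H H t0 x = V_H H A t0 x0" by simp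
qed

end

theorem theorem4p6:
  fixes A :: "(real^'n) set"
    and U :: "real \<Rightarrow> (real^'m) set"
    and H :: "real \<Rightarrow> real^'n \<Rightarrow> real^'n \<Rightarrow> real"
    and f :: "real \<Rightarrow> real^'n \<Rightarrow> real^'m \<Rightarrow> real^'n"
    and l :: "real \<Rightarrow> real^'n \<Rightarrow> real^'m \<Rightarrow> real"
    and \<phi> \<phi>1 :: "real \<Rightarrow> real"
  assumes A_ne: "A \<noteq> {}" and A_closed: "closed A"
    and U_meas: "measurable_multifun U"
    and U_ne: "\<And>t. t \<ge> 0 \<Longrightarrow> U t \<noteq> {}"
    and U_closed: "\<And>t. t \<ge> 0 \<Longrightarrow> closed (U t)"
    and H_meas: "\<And>x p. (\<lambda>t. H t x p) \<in> borel_measurable (lebesgue_on {0..})"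
    and H_cont: "\<And>t p. t \<ge> 0 \<Longrightarrow> continuous_on UNIV (\<lambda>x. H t x p)"
    and H_conv: "\<And>t x. t \<ge> 0 \<Longrightarrow> convex_on UNIV (\<lambda>p. H t x p)"
    and \<phi>_int: "integrable (lebesgue_on {0..}) \<phi>"
    and H_zero: "\<And>t x. t \<ge> 0 \<Longrightarrow> H t x 0 \<le> - \<phi> t"
    and f_meas: "\<And>x u. (\<lambda>t. f t x u) \<in> borel_measurable (lebesgue_on {0..})"
    and l_meas: "\<And>x u. (\<lambda>t. l t x u) \<in> borel_measurable (lebesgue_on {0..})"
    and f_cont: "\<And>t. t \<ge> 0 \<Longrightarrow> continuous_on UNIV (\<lambda>(x, u). f t x u)"
    and l_cont: "\<And>t. t \<ge> 0 \<Longrightarrow> continuous_on UNIV (\<lambda>(x, u). l t x u)"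
    and \<phi>1_int: "integrable (lebesgue_on {0..}) \<phi>1"
    and l_bound: "\<And>t x u. t \<ge> 0 \<Longrightarrow> l t x u \<ge> \<phi>1 t"
    and epi_rep: "\<And>t x. t \<ge> 0 \<Longrightarrow>
        gphHstar H t x \<subseteq> (\<lambda>u. (f t x u, l t x u)) ` U t \<and>
        (\<lambda>u. (f t x u, l t x u)) ` U t \<subseteq> epiHstar H t x"
  shows
    "(\<forall>t0\<ge>0. \<forall>x0\<in>A.
        (\<forall>x\<in>S_H H A t0 x0.
           integral_well_defined {t0..} (\<lambda>t. Hstar H t (x t) (vector_derivative x (at t)))) \<and>
        (\<forall>(x, u)\<in>S_f f U A t0 x0.
           integral_well_defined {t0..} (\<lambda>t. ereal (l t (x t) (u t)))) \<and>
        V_H H A t0 x0 = V_f f l U A t0 x0) \<and>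
     (\<forall>t0\<ge>0. \<forall>x0\<in>A. \<forall>xb.
        V_H H A t0 x0 < \<infinity> \<and> xb \<in> S_H H A t0 x0 \<and> cost_H H t0 xb = V_H H A t0 x0 \<longrightarrow>
        (\<exists>ub. (xb, ub) \<in> S_f f U A t0 x0 \<and> cost_f l t0 xb ub = V_f f l U A t0 x0)) \<and>
     (\<forall>t0\<ge>0. \<forall>x0\<in>A. \<forall>xb ub.
        V_f f l U A t0 x0 < \<infinity> \<and> (xb, ub) \<in> S_f f U A t0 x0 \<and>
        cost_f l t0 xb ub = V_f f l U A t0 x0 \<longrightarrow>
        xb \<in> S_H H A t0 x0 \<and> cost_H H t0 xb = V_H H A t0 x0)"
proof -
  interpret epigraphical_representation U H f l \<phi> \<phi>1
    by unfold_locales (fact assms)+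
  show ?thesis
    by (intro conjI allI impI ballI)
      (auto split: prod.split intro: integral_well_defined_Hstar integral_well_defined_running_cost
        V_H_eq_V_f optimal_trajectory_imp_optimal_pair optimal_pair_imp_optimal_trajectory)
qed

end
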